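(* Let $\mathbf{X}$, $\mathbf{A}$ be $\sigma$-structures and $k\ge1$. Then $\mathrm{SA}^k(\mathbf{X},\mathbf{A})$ is feasible if and only if $\mathrm{SA}^1(\mathbf{X}^{*k},\mathbf{A}^{*k})$ is feasible.
   Context: A signature $\sigma$ is a finite set of relation symbols with arities $\operatorname{ar}(R)\ge1$; a $\sigma$-structure $\mathbf{A}$ has finite universe $A$ and relations $R^\mathbf{A}\subseteq A^{\operatorname{ar}(R)}$. Constraints: $\mathcal{C}_\mathbf{A}=\{R(\mathbf{a}):R\in\sigma,\mathbf{a}\in R^\mathbf{A}\}$ (formal symbols). For a tuple $\mathbf{a}$, $a_i$ is its $i$-th entry, $\{\mathbf{a}\}$ its set of entries; for $\mathbf{a}\in A^j$ and $\mathbf{i}=(i_1,\dots,i_n)\in[j]^n$, $\pi_\mathbf{i}\mathbf{a}=(a_{i_1},\dots,a_{i_n})$. $\mathrm{SA}^k(\mathbf{X},\mathbf{A})$: variables $p_V(f)\in[0,1]$ for $V\subseteq X$ with $1\le|V|\le k$ and $f:V\to A$, and $p_{R(\mathbf{x})}(f)\in[0,1]$ for $R(\mathbf{x})\in\mathcal{C}_\mathbf{X}$ and $f:\{\mathbf{x}\}\to A$; constraints: $\sum_{f:V\to A}p_V(f)=1$ for each $V$; $p_U(f)=\sum_{g:V\to A,\,g|_U=f}p_V(g)$ for $U\subseteq V\subseteq X$, $|V|\le k$ (nonempty $U$), $f:U\to A$; $p_U(f)=\sum_{g:\{\mathbf{x}\}\to A,\,g|_U=f}p_{R(\mathbf{x})}(g)$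 for $R(\mathbf{x})\in\mathcal{C}_\mathbf{X}$, nonempty $U\subseteq\{\mathbf{x}\}$ with $|U|\le k$, $f:U\to A$; $p_{R(\mathbf{x})}(f)=0$ whenever $f(\mathbf{x})\notin R^\mathbf{A}$. Feasible means it has a rational solution. ($\mathrm{SA}^1$ is the case $k=1$.) For $k\ge1$, $\mathbf{A}^{*k}$ is the structure with universe $\bigcup_{1\le j\le k}A^j\cup\mathcal{C}_\mathbf{A}$ (disjoint) over signature $\sigma^*_k$ with relations: unary $T_{j,S}=\{\mathbf{a}\in A^j: a_i=a_{i'}\ \forall i,i'\in S\}$ for $j\le k$, $S\subseteq[j]$; binary $T_{j,\mathbf{i}}=\{(\mathbf{a},\pi_\mathbf{i}\mathbf{a}):\mathbf{a}\in A^j\}$ for $j,j'\le k$, $\mathbf{i}\in[j]^{j'}$; unary $R_S=\{R(\mathbf{a}):\mathbf{a}\in R^\mathbf{A},\ a_i=a_{i'}\ \forall i,i'\in S\}$ for $R\in\sigma$, $S\subseteq[\operatorname{ar}(R)]$; binary $R_\mathbf{i}=\{(R(\mathbf{a}),\pi_\mathbf{i}\mathbf{a}):\mathbf{a}\in R^\mathbf{A}\}$ for $R\in\sigma$, $j\le k$, $\mathbf{i}\in[\operatorname{ar}(R)]^j$. *)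

theory Defs
  imports Complex_Main "HOL-Library.FuncSet"
begin

text \<open>Tuple positions are indexed from 0 (so [j] is rendered as {0..<j}).\<close>

record ('u, 'r) struc =
  univ :: "'u set"
  rels :: "'r \<Rightarrow> 'u list set"

definition signature :: "'r set \<Rightarrow> ('r \<Rightarrow> nat) \<Rightarrow> bool" where
  "signature sig ar \<longleftrightarrow> finite sig \<and> (\<forall>R\<in>sig. 1 \<le> ar R)"

definition is_struc :: "'r set \<Rightarrow> ('r \<Rightarrow> nat) \<Rightarrow> ('u, 'r) struc \<Rightarrow> bool" where
  "is_struc sig ar S \<longleftrightarrow> finite (univ S) \<and>
     (\<forall>R\<in>sig. rels S R \<subseteq> {xs. length xs = ar R \<and> set xs \<subseteq> univ S})"

definition SA_feasible ::
  "'r set \<Rightarrow> ('r \<Rightarrow> nat) \<Rightarrow> nat \<Rightarrow> ('x, 'r) struc \<Rightarrow> ('a, 'r) struc \<Rightarrow> bool" where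
  "SA_feasible sig ar k X A \<longleftrightarrow>
    (\<exists>(p :: 'x set \<Rightarrow> ('x \<Rightarrow> 'a) \<Rightarrow> rat) (q :: 'r \<Rightarrow> 'x list \<Rightarrow> ('x \<Rightarrow> 'a) \<Rightarrow> rat).
      \<comment> \<open>variable ranges\<close>
      (\<forall>V f. V \<subseteq> univ X \<and> 1 \<le> card V \<and> card V \<le> k \<and> f \<in> V \<rightarrow>\<^sub>E univ A
          \<longrightarrow> 0 \<le> p V f \<and> p V f \<le> 1) \<and>
      (\<forall>R x f. R \<in> sig \<and> x \<in> rels X R \<and> f \<in> set x \<rightarrow>\<^sub>E univ A
          \<longrightarrow> 0 \<le> q R x f \<and> q R x f \<le> 1) \<and>
      \<comment> \<open>normalisation\<close>
      (\<forall>V. V \<subseteq> univ X \<and> 1 \<le> card V \<and> card V \<le> k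
          \<longrightarrow> (\<Sum>f\<in>V \<rightarrow>\<^sub>E univ A. p V f) = 1) \<and>
      \<comment> \<open>marginalisation between sets\<close>
      (\<forall>U V f. U \<noteq> {} \<and> U \<subseteq> V \<and> V \<subseteq> univ X \<and> card V \<le> k \<and> f \<in> U \<rightarrow>\<^sub>E univ A
          \<longrightarrow> p U f = (\<Sum>g\<in>{g \<in> V \<rightarrow>\<^sub>E univ A. restrict g U = f}. p V g)) \<and>
      \<comment> \<open>marginalisation of constraint variables\<close>
      (\<forall>R x U f. R \<in> sig \<and> x \<in> rels X R \<and> U \<noteq> {} \<and> U \<subseteq> set x \<and> card U \<le> k
          \<and> f \<in> U \<rightarrow>\<^sub>E univ A
          \<longrightarrow> p U f = (\<Sum>g\<in>{g \<in> set x \<rightarrow>\<^sub>E univ A. restrict g U = f}. q R x g)) \<and>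
      \<comment> \<open>support on the relation of A\<close>
      (\<forall>R x f. R \<in> sig \<and> x \<in> rels X R \<and> f \<in> set x \<rightarrow>\<^sub>E univ A \<and> map f x \<notin> rels A R
          \<longrightarrow> q R x f = 0))"

text \<open>The signature sigma*_k. TS j S = T_{j,S}; TI j i = T_{j,i} (with j' = length i);
RS R S = R_S; RI R i = R_i (with j = length i).\<close>

datatype 'r starsym = TS nat "nat set" | TI nat "nat list" | RS 'r "nat set" | RI 'r "nat list"

definition star_sig :: "'r set \<Rightarrow> ('r \<Rightarrow> nat) \<Rightarrow> nat \<Rightarrow> 'r starsym set" where
  "star_sig sig ar k =
     {TS j S | j S. 1 \<le> j \<and> j \<le> k \<and> S \<subseteq> {0..<j}} \<union>
     {TI j i | j i. 1 \<le> j \<and> j \<le> k \<and> 1 \<le> length i \<and> length i \<le> k \<and> set i \<subseteq> {0..<j}} \<union>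
     {RS R S | R S. R \<in> sig \<and> S \<subseteq> {0..<ar R}} \<union>
     {RI R i | R i. R \<in> sig \<and> 1 \<le> length i \<and> length i \<le> k \<and> set i \<subseteq> {0..<ar R}}"

fun star_ar :: "'r starsym \<Rightarrow> nat" where
  "star_ar (TS _ _) = 1"
| "star_ar (TI _ _) = 2"
| "star_ar (RS _ _) = 1"
| "star_ar (RI _ _) = 2"

text \<open>The structure A^{*k}: universe is the disjoint union of the tuples A^j (1 \<le> j \<le> k), as Inl,
and the constraints R(a) of A, as Inr (R, a).\<close>

definition star :: "'r set \<Rightarrow> ('r \<Rightarrow> nat) \<Rightarrow> nat \<Rightarrow> ('a, 'r) struc
    \<Rightarrow> ('a list + ('r \<times> 'a list), 'r starsym) struc" where
  "star sig ar k A = \<lparr>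
     univ = Inl ` {a. 1 \<le> length a \<and> length a \<le> k \<and> set a \<subseteq> univ A}
            \<union> Inr ` {(R, a). R \<in> sig \<and> a \<in> rels A R},
     rels = (\<lambda>s. case s of
        TS j S \<Rightarrow> {[Inl a] | a. length a = j \<and> set a \<subseteq> univ A \<and>
                                (\<forall>i\<in>S. \<forall>i'\<in>S. a ! i = a ! i')}
      | TI j ix \<Rightarrow> {[Inl a, Inl (map (\<lambda>t. a ! t) ix)] | a. length a = j \<and> set a \<subseteq> univ A}
      | RS R S \<Rightarrow> {[Inr (R, a)] | a. a \<in> rels A R \<and> (\<forall>i\<in>S. \<forall>i'\<in>S. a ! i = a ! i')}
      | RI R ix \<Rightarrow> {[Inr (R, a), Inl (map (\<lambda>t. a ! t) ix)] | a. a \<in> rels A R}) \<rparr>"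

end

(*
  An element w of X^{*k} is a tuple of at most k elements of X or a constraint R(x) of X; either
  way it has an underlying tuple, and an assignment f of its entries into A sends it to the
  element elem_map f w of A^{*k} of the same shape.

  Given an SA^k solution, the distribution at w on assignments of its entries (p for tuples, q for
  constraints) is pushed forward along f |-> elem_map f w to give the SA^1 distribution at w.
  Every constraint of X^{*k} has the form [w] or [w, pi_i w], and its joint distribution is pushed
  forward from w as well; its consistency with the distribution at pi_i w is the marginalisation
  property of SA^k.

  Conversely, the unary relations T_{j,S} and R_S record which entries of w coincide, so an SA^1
  solution puts its mass at w on images elem_map g w only. As g |-> elem_map g w is injective, it
  pulls back to a distribution on assignments. The binary relations T_{j,i} and R_i make the
  distribution at pi_i w the image of the one at w, and this gives the marginalisation conditions
  of SA^k.
*)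

theory Submission
  imports Defs
begin

lemma sum_PiE_singleton: "(\<Sum>h\<in>{w} \<rightarrow>\<^sub>E B. \<phi> (h w)) = (\<Sum>c\<in>B. \<phi> c)"
  by (rule sum.reindex_bij_witness[of _ "\<lambda>c. \<lambda>_\<in>{w}. c" "\<lambda>h. h w"])
     (auto simp: PiE_iff extensional_def fun_eq_iff)

lemma restrict_singleton_eq_iff:
  "f \<in> {u} \<rightarrow>\<^sub>E B \<Longrightarrow> restrict g {u} = f \<longleftrightarrow> g u = f u"
  by (auto simp: fun_eq_iff PiE_iff extensional_def)

lemma restrict_eq_iff_map_eq:
  assumes "f \<in> set y \<rightarrow>\<^sub>E B"
  shows "restrict g (set y) = f \<longleftrightarrow> map g y = map f y"
  using assms by (auto simp: fun_eq_iff PiE_iff extensional_def)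

lemma sum_group_support:
  fixes h :: "'a \<Rightarrow> 'c::comm_monoid_add"
  assumes "finite S" "finite T" "\<And>x. x \<in> S \<Longrightarrow> h x \<noteq> 0 \<Longrightarrow> g x \<in> T"
  shows "(\<Sum>y\<in>T. \<Sum>x\<in>{x \<in> S. g x = y}. h x) = (\<Sum>x\<in>S. h x)"
proof -
  let ?S' = "{x \<in> S. g x \<in> T}"
  have "(\<Sum>y\<in>T. \<Sum>x\<in>{x \<in> S. g x = y}. h x) = (\<Sum>y\<in>T. \<Sum>x\<in>{x \<in> ?S'. g x = y}. h x)"
    by (intro sum.cong refl arg_cong2[where f = sum]) auto
  also have "\<dots> = (\<Sum>x\<in>?S'. h x)"
    using assms(1,2) by (intro sum.group) auto
  also have "\<dots> = (\<Sum>x\<in>S. h x)"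
    using assms by (intro sum.mono_neutral_left) auto
  finally show ?thesis .
qed

lemma sum_PiE_marginal:
  fixes \<mu> :: "'a \<Rightarrow> 'c::comm_monoid_add"
  assumes "finite F" "finite W" "finite C" "u \<in> W"
    and "\<And>f w. f \<in> F \<Longrightarrow> \<mu> f \<noteq> 0 \<Longrightarrow> w \<in> W \<Longrightarrow> \<phi> f w \<in> C"
  shows "(\<Sum>h\<in>{h \<in> W \<rightarrow>\<^sub>E C. h u = c}. \<Sum>f\<in>{f \<in> F. \<forall>w\<in>W. \<phi> f w = h w}. \<mu> f)
    = (\<Sum>f\<in>{f \<in> F. \<phi> f u = c}. \<mu> f)"
proof -
  have "{f \<in> {f \<in> F. \<phi> f u = c}. (\<lambda>w\<in>W. \<phi> f w) = h} = {f \<in> F. \<forall>w\<in>W. \<phi> f w = h w}"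
    if "h \<in> {h \<in> W \<rightarrow>\<^sub>E C. h u = c}" for h
    using that assms(4) by (auto simp: fun_eq_iff PiE_iff extensional_def)
  then have "(\<Sum>h\<in>{h \<in> W \<rightarrow>\<^sub>E C. h u = c}. \<Sum>f\<in>{f \<in> F. \<forall>w\<in>W. \<phi> f w = h w}. \<mu> f)
    = (\<Sum>h\<in>{h \<in> W \<rightarrow>\<^sub>E C. h u = c}. \<Sum>f\<in>{f \<in> {f \<in> F. \<phi> f u = c}. (\<lambda>w\<in>W. \<phi> f w) = h}. \<mu> f)"
    by (intro sum.cong) auto
  also have "\<dots> = (\<Sum>f\<in>{f \<in> F. \<phi> f u = c}. \<mu> f)"
    by (rule sum_group_support) (use assms in \<open>auto simp: finite_PiE\<close>)
  finally show ?thesis .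
qed

lemma ex_indices_map_nth:
  assumes "set y \<subseteq> set e"
  shows "\<exists>ix. set ix \<subseteq> {0..<length e} \<and> length ix = length y \<and> y = map ((!) e) ix"
  using assms
proof (induction y)
  case Nil
  show ?case by simp
next
  case (Cons v y)
  then obtain ix where "set ix \<subseteq> {0..<length e}" "length ix = length y" "y = map ((!) e) ix"
    by auto
  moreover obtain i where "i < length e" "e ! i = v"
    using Cons.prems by (auto simp: in_set_conv_nth)
  ultimately show ?case
    by (intro exI[of _ "i # ix"]) auto
qed

lemma ex_PiE_map_eq:
  assumes "length a = length x" "set a \<subseteq> B"
    and "\<And>i j. i < length x \<Longrightarrow> j < length x \<Longrightarrow> x ! i = x ! j \<Longrightarrow> a ! i = a ! j"
  shows "\<exists>g \<in> set x \<rightarrow>\<^sub>E B. map g x = a"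
proof -
  define pos where "pos v = (SOME i. i < length x \<and> x ! i = v)" for v
  have pos: "pos v < length x \<and> x ! pos v = v" if "v \<in> set x" for v
    unfolding pos_def by (rule someI_ex) (use that in \<open>auto simp: in_set_conv_nth\<close>)
  define g where "g = (\<lambda>v\<in>set x. a ! pos v)"
  have "map g x = a"
  proof (rule nth_equalityI)
    fix i assume "i < length (map g x)"
    then have "i < length x" by simp
    with pos[of "x ! i"] show "map g x ! i = a ! i"
      by (auto simp: g_def intro: assms(3))
  qed (use assms(1) in simp)
  moreover have "g \<in> set x \<rightarrow>\<^sub>E B"
    using pos assms(1,2) by (auto simp: g_def dest!: nth_mem[of _ a])
  ultimately show ?thesis by blast
qed

lemma card_set_bounds: "1 \<le> length x \<Longrightarrow> length x \<le> k \<Longrightarrow> 1 \<le> card (set x) \<and> card (set x) \<le> k"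
  using card_length[of x] by (cases x) (auto simp: Suc_le_eq card_gt_0_iff)

definition enum_list :: "'a set \<Rightarrow> 'a list" where
  "enum_list V = (SOME xs. set xs = V \<and> distinct xs)"

lemma enum_list:
  assumes "finite V"
  shows "set (enum_list V) = V" "length (enum_list V) = card V"
proof -
  have "set (enum_list V) = V \<and> distinct (enum_list V)"
    unfolding enum_list_def using finite_distinct_list[OF assms] by (rule someI_ex)
  then show "set (enum_list V) = V" "length (enum_list V) = card V"
    using distinct_card by fastforce+
qed

section \<open>The structures of tuples and constraints\<close>

type_synonym ('x, 'r) star_elem = "'x list + 'r \<times> 'x list"

definition elem_tuple :: "('x, 'r) star_elem \<Rightarrow> 'x list" where
  "elem_tuple = case_sum id snd"

definition elem_map :: "('x \<Rightarrow> 'a) \<Rightarrow> ('x, 'r) star_elem \<Rightarrow> ('a, 'r) star_elem" where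
  "elem_map f = map_sum (map f) (apsnd (map f))"

definition proj_elem :: "nat list \<Rightarrow> ('x, 'r) star_elem \<Rightarrow> ('x, 'r) star_elem" where
  "proj_elem ix w = Inl (map ((!) (elem_tuple w)) ix)"

definition unary_sym :: "('x, 'r) star_elem \<Rightarrow> nat set \<Rightarrow> 'r starsym" where
  "unary_sym w S = (case w of Inl x \<Rightarrow> TS (length x) S | Inr (R, _) \<Rightarrow> RS R S)"

definition binary_sym :: "('x, 'r) star_elem \<Rightarrow> nat list \<Rightarrow> 'r starsym" where
  "binary_sym w ix = (case w of Inl x \<Rightarrow> TI (length x) ix | Inr (R, _) \<Rightarrow> RI R ix)"

(* A constant rather than its unfolding, which is a looping simp rule. *)
definition agree_on :: "nat set \<Rightarrow> 'a list \<Rightarrow> bool" where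
  "agree_on S a \<longleftrightarrow> (\<forall>i\<in>S. \<forall>i'\<in>S. a ! i = a ! i')"

lemma agree_on_pair [simp]: "agree_on {i, i'} a \<longleftrightarrow> a ! i = a ! i'"
  by (auto simp: agree_on_def)

lemma agree_on_map:
  assumes "S \<subseteq> {0..<length a}" "agree_on S a"
  shows "agree_on S (map f a)"
  unfolding agree_on_def
proof (intro ballI)
  fix i i' assume "i \<in> S" "i' \<in> S"
  with assms show "map f a ! i = map f a ! i'"
    unfolding agree_on_def by (metis atLeastLessThan_iff nth_map subsetD)
qed

lemma elem_tuple_simps [simp]: "elem_tuple (Inl x) = x" "elem_tuple (Inr (R, x)) = x"
  by (simp_all add: elem_tuple_def)

lemma elem_map_simps [simp]:
  "elem_map f (Inl x) = Inl (map f x)" "elem_map f (Inr (R, x)) = Inr (R, map f x)"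
  by (simp_all add: elem_map_def)

lemma elem_map_id [simp]: "elem_map id w = w"
  by (cases w) auto

lemma elem_tuple_elem_map [simp]: "elem_tuple (elem_map f w) = map f (elem_tuple w)"
  by (cases w) auto

lemma elem_map_proj_elem:
  "set ix \<subseteq> {0..<length (elem_tuple w)} \<Longrightarrow> elem_map f (proj_elem ix w) = proj_elem ix (elem_map f w)"
  by (auto simp: proj_elem_def)

lemma inj_on_elem_map: "inj_on (\<lambda>g. elem_map g w) (set (elem_tuple w) \<rightarrow>\<^sub>E B)"
proof (rule inj_onI)
  fix g g' assume "g \<in> set (elem_tuple w) \<rightarrow>\<^sub>E B" "g' \<in> set (elem_tuple w) \<rightarrow>\<^sub>E B"
    and "elem_map g w = elem_map g' w"
  then show "g = g'"
    by (intro PiE_ext[of g _ "\<lambda>_. B"]) (auto dest!: arg_cong[of _ _ elem_tuple] simp: map_eq_conv)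
qed

lemma univ_star_Inl [simp]:
  "Inl a \<in> univ (star sig ar k A) \<longleftrightarrow> 1 \<le> length a \<and> length a \<le> k \<and> set a \<subseteq> univ A"
  by (auto simp: star_def)

lemma univ_star_Inr [simp]:
  "Inr (R, a) \<in> univ (star sig ar k A) \<longleftrightarrow> R \<in> sig \<and> a \<in> rels A R"
  by (auto simp: star_def)

lemma rels_star_simps:
  "rels (star sig ar k A) (TS j S) = {[Inl a] | a. length a = j \<and> set a \<subseteq> univ A \<and> agree_on S a}"
  "rels (star sig ar k A) (TI j ix) = {[Inl a, Inl (map ((!) a) ix)] | a. length a = j \<and> set a \<subseteq> univ A}"
  "rels (star sig ar k A) (RS R S) = {[Inr (R, a)] | a. a \<in> rels A R \<and> agree_on S a}"
  "rels (star sig ar k A) (RI R ix) = {[Inr (R, a), Inl (map ((!) a) ix)] | a. a \<in> rels A R}"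
  by (simp_all add: star_def agree_on_def)

lemma star_sig_simps [simp]:
  "TS j S \<in> star_sig sig ar k \<longleftrightarrow> 1 \<le> j \<and> j \<le> k \<and> S \<subseteq> {0..<j}"
  "TI j ix \<in> star_sig sig ar k \<longleftrightarrow>
     1 \<le> j \<and> j \<le> k \<and> 1 \<le> length ix \<and> length ix \<le> k \<and> set ix \<subseteq> {0..<j}"
  "RS R S \<in> star_sig sig ar k \<longleftrightarrow> R \<in> sig \<and> S \<subseteq> {0..<ar R}"
  "RI R ix \<in> star_sig sig ar k \<longleftrightarrow> R \<in> sig \<and> 1 \<le> length ix \<and> length ix \<le> k \<and> set ix \<subseteq> {0..<ar R}"
  by (auto simp: star_sig_def)

lemma is_struc_rels:
  "is_struc sig ar A \<Longrightarrow> R \<in> sig \<Longrightarrow> a \<in> rels A R \<Longrightarrow> length a = ar R \<and> set a \<subseteq> univ A"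
  by (auto simp: is_struc_def)

lemma finite_univ_star:
  assumes "signature sig ar" "is_struc sig ar A"
  shows "finite (univ (star sig ar k A))"
proof -
  have lists: "finite {a. set a \<subseteq> univ A \<and> length a \<le> n}" for n
    using assms(2) by (intro finite_lists_length_le) (simp add: is_struc_def)
  have "finite {a. 1 \<le> length a \<and> length a \<le> k \<and> set a \<subseteq> univ A}"
    by (rule finite_subset[OF _ lists[of k]]) auto
  moreover have "finite (rels A R)" if "R \<in> sig" for R
    by (rule finite_subset[OF _ lists[of "ar R"]]) (use is_struc_rels[OF assms(2) that] in auto)
  then have "finite (Sigma sig (rels A))"
    using assms(1) by (simp add: signature_def)
  moreover have "{(R, a). R \<in> sig \<and> a \<in> rels A R} = Sigma sig (rels A)"
    by auto
  ultimately show ?thesis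
    by (simp add: star_def)
qed

lemma univ_starE:
  assumes "w \<in> univ (star sig ar k A)"
  obtains (Inl) a where "w = Inl a" "1 \<le> length a" "length a \<le> k" "set a \<subseteq> univ A"
  | (Inr) R a where "w = Inr (R, a)" "R \<in> sig" "a \<in> rels A R"
  using assms by (cases w) auto

lemma elem_tuple_univ_star:
  assumes "signature sig ar" "is_struc sig ar X" "w \<in> univ (star sig ar k X)"
  shows "elem_tuple w \<noteq> [] \<and> set (elem_tuple w) \<subseteq> univ X"
  using assms(3)
proof (cases rule: univ_starE)
  case (Inr R x)
  with assms(1,2) show ?thesis
    by (force simp: signature_def dest: is_struc_rels)
qed auto

lemma unary_sym_in_star_sig:
  assumes "is_struc sig ar X" "w \<in> univ (star sig ar k X)" "S \<subseteq> {0..<length (elem_tuple w)}"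
  shows "unary_sym w S \<in> star_sig sig ar k"
  using assms by (cases w) (auto simp: unary_sym_def dest: is_struc_rels)

lemma binary_sym_in_star_sig:
  assumes "is_struc sig ar X" "w \<in> univ (star sig ar k X)"
    and "1 \<le> length ix" "length ix \<le> k" "set ix \<subseteq> {0..<length (elem_tuple w)}"
  shows "binary_sym w ix \<in> star_sig sig ar k"
  using assms(2)
proof (cases rule: univ_starE)
  case (Inr R x)
  with assms is_struc_rels[OF assms(1)] show ?thesis by (simp add: binary_sym_def)
qed (use assms in \<open>simp add: binary_sym_def\<close>)

lemma elem_map_in_rels_unary_sym:
  assumes "elem_map f w \<in> univ (star sig ar k A)" "S \<subseteq> {0..<length (elem_tuple w)}"
    and "agree_on S (elem_tuple w)"
  shows "[elem_map f w] \<in> rels (star sig ar k A) (unary_sym w S)"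
  using assms agree_on_map[OF assms(2,3), of f]
  by (cases w) (auto simp: unary_sym_def rels_star_simps)

lemma elem_map_in_rels_binary_sym:
  assumes "elem_map f w \<in> univ (star sig ar k A)"
  shows "[elem_map f w, proj_elem ix (elem_map f w)] \<in> rels (star sig ar k A) (binary_sym w ix)"
  using assms by (cases w) (auto simp: binary_sym_def rels_star_simps proj_elem_def)

lemma rels_binary_sym_proj_elem:
  assumes "[c, c'] \<in> rels (star sig ar k A) (binary_sym w ix)"
  shows "c' = proj_elem ix c"
  using assms by (cases w) (auto simp: binary_sym_def rels_star_simps proj_elem_def)

lemma rels_star_cases:
  assumes "is_struc sig ar X" "s \<in> star_sig sig ar k" "xs \<in> rels (star sig ar k X) s"
  obtains (unary) w S where "xs = [w]" "s = unary_sym w S" "w \<in> univ (star sig ar k X)"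
      "S \<subseteq> {0..<length (elem_tuple w)}" "agree_on S (elem_tuple w)"
  | (binary) w ix where "xs = [w, proj_elem ix w]" "s = binary_sym w ix" "w \<in> univ (star sig ar k X)"
      "1 \<le> length ix" "length ix \<le> k" "set ix \<subseteq> {0..<length (elem_tuple w)}"
proof (cases s)
  case (TS j S)
  with assms(2,3) that(1) show ?thesis
    by (auto simp: rels_star_simps unary_sym_def)
next
  case (TI j ix)
  with assms(2,3) that(2) show ?thesis
    by (auto simp: rels_star_simps binary_sym_def proj_elem_def)
next
  case (RS R S)
  with assms that(1) show ?thesis
    by (auto simp: rels_star_simps unary_sym_def dest: is_struc_rels)
next
  case (RI R ix)
  with assms that(2) show ?thesis
    by (auto simp: rels_star_simps binary_sym_def proj_elem_def dest: is_struc_rels)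
qed

lemma elem_map_in_rels_star:
  assumes "is_struc sig ar X" "s \<in> star_sig sig ar k" "xs \<in> rels (star sig ar k X) s"
    and "elem_map f (hd xs) \<in> univ (star sig ar k A)"
  shows "map (elem_map f) xs \<in> rels (star sig ar k A) s"
  using assms(1-3)
proof (cases rule: rels_star_cases)
  case (unary w S)
  with assms(4) show ?thesis
    by (simp add: elem_map_in_rels_unary_sym)
next
  case (binary w ix)
  with assms(4) show ?thesis
    by (simp add: elem_map_proj_elem elem_map_in_rels_binary_sym)
qed

lemma rels_unary_sym_agree_on:
  assumes "[c] \<in> rels (star sig ar k A) (unary_sym w S)"
  shows "agree_on S (elem_tuple c)"
  using assms by (cases w) (auto simp: unary_sym_def rels_star_simps)

lemma ex_elem_map_eq_if_rels_unary_sym: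
  assumes "is_struc sig ar X" "is_struc sig ar A" "w \<in> univ (star sig ar k X)"
    and unary: "\<And>S. S \<subseteq> {0..<length (elem_tuple w)} \<Longrightarrow> agree_on S (elem_tuple w) \<Longrightarrow>
      [c] \<in> rels (star sig ar k A) (unary_sym w S)"
  shows "\<exists>g \<in> set (elem_tuple w) \<rightarrow>\<^sub>E univ A. c = elem_map g w"
proof -
  have agree: "elem_tuple c ! i = elem_tuple c ! i'"
    if "i < length (elem_tuple w)" "i' < length (elem_tuple w)" "elem_tuple w ! i = elem_tuple w ! i'"
    for i i'
    using rels_unary_sym_agree_on[OF unary[of "{i, i'}"]] that by simp
  have shape: "length (elem_tuple c) = length (elem_tuple w) \<and> set (elem_tuple c) \<subseteq> univ A \<and>
    (\<forall>g. map g (elem_tuple w) = elem_tuple c \<longrightarrow> c = elem_map g w)"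
    using assms(3)
  proof (cases rule: univ_starE)
    case (Inl x)
    with unary[of "{}"] show ?thesis
      by (auto simp: unary_sym_def rels_star_simps agree_on_def)
  next
    case (Inr R x)
    with unary[of "{}"] obtain a where "c = Inr (R, a)" "a \<in> rels A R"
      by (auto simp: unary_sym_def rels_star_simps agree_on_def)
    with Inr is_struc_rels[OF assms(1)] is_struc_rels[OF assms(2)] show ?thesis
      by auto
  qed
  then obtain g where "g \<in> set (elem_tuple w) \<rightarrow>\<^sub>E univ A" "map g (elem_tuple w) = elem_tuple c"
    using ex_PiE_map_eq[of "elem_tuple c" "elem_tuple w" "univ A"] agree by blast
  with shape show ?thesis
    by blast
qed

lemma rels_star_members:
  assumes "is_struc sig ar X" "s \<in> star_sig sig ar k" "xs \<in> rels (star sig ar k X) s"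
  shows "hd xs \<in> univ (star sig ar k X) \<and> (\<forall>v\<in>set xs. v = hd xs \<or>
    (\<exists>y. v = Inl y \<and> set y \<subseteq> set (elem_tuple (hd xs)) \<and> 1 \<le> length y \<and> length y \<le> k))"
  using assms
proof (cases rule: rels_star_cases)
  case (binary w ix)
  then show ?thesis
    by (auto simp: proj_elem_def)
qed simp

locale star_structures =
  fixes sig :: "'r set" and ar :: "'r \<Rightarrow> nat" and X :: "('x, 'r) struc" and A :: "('a, 'r) struc"
    and k :: nat
  assumes signature: "signature sig ar" and struc_X: "is_struc sig ar X"
    and struc_A: "is_struc sig ar A" and k_pos: "1 \<le> k"
begin

abbreviation "Xs \<equiv> star sig ar k X"
abbreviation "As \<equiv> star sig ar k A"

lemma finite_univ_A: "finite (univ A)"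
  using struc_A by (simp add: is_struc_def)

lemma finite_univ_X: "finite (univ X)"
  using struc_X by (simp add: is_struc_def)

lemma finite_univ_Xs: "finite (univ Xs)"
  by (rule finite_univ_star[OF signature struc_X])

lemma finite_univ_As: "finite (univ As)"
  by (rule finite_univ_star[OF signature struc_A])

end

locale SA_solution =
  fixes sig :: "'r set" and k :: nat and X :: "('x, 'r) struc" and A :: "('a, 'r) struc"
    and p :: "'x set \<Rightarrow> ('x \<Rightarrow> 'a) \<Rightarrow> rat" and q :: "'r \<Rightarrow> 'x list \<Rightarrow> ('x \<Rightarrow> 'a) \<Rightarrow> rat"
  assumes p_bounds: "\<And>V f. V \<subseteq> univ X \<Longrightarrow> 1 \<le> card V \<Longrightarrow> card V \<le> k \<Longrightarrow> f \<in> V \<rightarrow>\<^sub>E univ A \<Longrightarrow>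
      0 \<le> p V f \<and> p V f \<le> 1"
    and q_bounds: "\<And>R x f. R \<in> sig \<Longrightarrow> x \<in> rels X R \<Longrightarrow> f \<in> set x \<rightarrow>\<^sub>E univ A \<Longrightarrow>
      0 \<le> q R x f \<and> q R x f \<le> 1"
    and p_sum: "\<And>V. V \<subseteq> univ X \<Longrightarrow> 1 \<le> card V \<Longrightarrow> card V \<le> k \<Longrightarrow> (\<Sum>f\<in>V \<rightarrow>\<^sub>E univ A. p V f) = 1"
    and p_marginal: "\<And>U V f. U \<noteq> {} \<Longrightarrow> U \<subseteq> V \<Longrightarrow> V \<subseteq> univ X \<Longrightarrow> card V \<le> k \<Longrightarrow>
      f \<in> U \<rightarrow>\<^sub>E univ A \<Longrightarrow> p U f = (\<Sum>g\<in>{g \<in> V \<rightarrow>\<^sub>E univ A. restrict g U = f}. p V g)"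
    and q_marginal: "\<And>R x U f. R \<in> sig \<Longrightarrow> x \<in> rels X R \<Longrightarrow> U \<noteq> {} \<Longrightarrow> U \<subseteq> set x \<Longrightarrow>
      card U \<le> k \<Longrightarrow> f \<in> U \<rightarrow>\<^sub>E univ A \<Longrightarrow>
      p U f = (\<Sum>g\<in>{g \<in> set x \<rightarrow>\<^sub>E univ A. restrict g U = f}. q R x g)"
    and q_support: "\<And>R x f. R \<in> sig \<Longrightarrow> x \<in> rels X R \<Longrightarrow> f \<in> set x \<rightarrow>\<^sub>E univ A \<Longrightarrow>
      map f x \<notin> rels A R \<Longrightarrow> q R x f = 0"

lemma SA_feasible_iff_SA_solution: "SA_feasible sig ar k X A \<longleftrightarrow> (\<exists>p q. SA_solution sig k X A p q)"
  unfolding SA_feasible_def SA_solution_def by (simp add: imp_conjL)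

lemma SA_solution_1I:
  assumes "finite (univ X)"
    and d_bounds: "\<And>w c. w \<in> univ X \<Longrightarrow> c \<in> univ A \<Longrightarrow> 0 \<le> d w c \<and> d w c \<le> 1"
    and d_sum: "\<And>w. w \<in> univ X \<Longrightarrow> (\<Sum>c\<in>univ A. d w c) = 1"
    and q_bounds: "\<And>R x f. R \<in> sig \<Longrightarrow> x \<in> rels X R \<Longrightarrow> f \<in> set x \<rightarrow>\<^sub>E univ A \<Longrightarrow>
      0 \<le> q R x f \<and> q R x f \<le> 1"
    and d_marginal: "\<And>R x u c. R \<in> sig \<Longrightarrow> x \<in> rels X R \<Longrightarrow> u \<in> set x \<Longrightarrow> c \<in> univ A \<Longrightarrow>
      d u c = (\<Sum>g\<in>{g \<in> set x \<rightarrow>\<^sub>E univ A. g u = c}. q R x g)"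
    and q_support: "\<And>R x f. R \<in> sig \<Longrightarrow> x \<in> rels X R \<Longrightarrow> f \<in> set x \<rightarrow>\<^sub>E univ A \<Longrightarrow>
      map f x \<notin> rels A R \<Longrightarrow> q R x f = 0"
  shows "SA_solution sig 1 X A (\<lambda>V f. d (the_elem V) (f (the_elem V))) q"
proof
  have singleton: "\<exists>w. V = {w}" if "1 \<le> card V" "card V \<le> 1" for V :: "'x set"
    using that by (metis card_1_singletonE le_antisym One_nat_def)
  show "0 \<le> d (the_elem V) (f (the_elem V)) \<and> d (the_elem V) (f (the_elem V)) \<le> 1"
    if "V \<subseteq> univ X" "1 \<le> card V" "card V \<le> 1" "f \<in> V \<rightarrow>\<^sub>E univ A" for V f
    using singleton[OF that(2,3)] that(1,4) d_bounds by (force simp: PiE_iff)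
  show "(\<Sum>f\<in>V \<rightarrow>\<^sub>E univ A. d (the_elem V) (f (the_elem V))) = 1"
    if "V \<subseteq> univ X" "1 \<le> card V" "card V \<le> 1" for V
    using singleton[OF that(2,3)] that(1) d_sum by (auto simp: sum_PiE_singleton)
  show "d (the_elem U) (f (the_elem U)) =
      (\<Sum>g\<in>{g \<in> V \<rightarrow>\<^sub>E univ A. restrict g U = f}. d (the_elem V) (g (the_elem V)))"
    if "U \<noteq> {}" "U \<subseteq> V" "V \<subseteq> univ X" "card V \<le> 1" "f \<in> U \<rightarrow>\<^sub>E univ A" for U V f
  proof -
    have "finite V"
      using that(3) assms(1) by (rule finite_subset)
    then have "1 \<le> card U" "card U \<le> card V"
      using that(1,2) finite_subset[OF that(2)] by (auto simp: Suc_le_eq card_gt_0_iff card_mono)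
    with \<open>finite V\<close> that(2,4) have "U = V"
      by (intro card_subset_eq) auto
    moreover have "{g \<in> V \<rightarrow>\<^sub>E univ A. restrict g V = f} = {f}"
      using that(5) unfolding \<open>U = V\<close> by (auto simp: restrict_PiE_iff)
    ultimately show ?thesis
      by simp
  qed
  show "d (the_elem U) (f (the_elem U)) = (\<Sum>g\<in>{g \<in> set x \<rightarrow>\<^sub>E univ A. restrict g U = f}. q R x g)"
    if "R \<in> sig" "x \<in> rels X R" "U \<noteq> {}" "U \<subseteq> set x" "card U \<le> 1" "f \<in> U \<rightarrow>\<^sub>E univ A"
    for R x U f
  proof -
    have "1 \<le> card U"
      using that(3) finite_subset[OF that(4)] by (auto simp: Suc_le_eq card_gt_0_iff)
    with singleton[of U] that(5) obtain u where U: "U = {u}"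
      by auto
    with that(6) have "{g \<in> set x \<rightarrow>\<^sub>E univ A. restrict g U = f} = {g \<in> set x \<rightarrow>\<^sub>E univ A. g u = f u}"
      by (simp add: restrict_singleton_eq_iff)
    with U that(1,2,4,6) show ?thesis
      by (simp add: d_marginal PiE_iff)
  qed
qed (fact q_bounds q_support)+

section \<open>Pushing an SA^k solution forward\<close>

locale SA_k_solution = star_structures sig ar X A k + SA_solution sig k X A p q
  for sig :: "'r set" and ar and X :: "('x, 'r) struc" and A :: "('a, 'r) struc" and k p q
begin

definition elem_dist :: "('x, 'r) star_elem \<Rightarrow> ('x \<Rightarrow> 'a) \<Rightarrow> rat" where
  "elem_dist w f = (case w of Inl x \<Rightarrow> p (set x) f | Inr (R, x) \<Rightarrow> q R x f)"

lemma elem_dist_simps [simp]: "elem_dist (Inl x) f = p (set x) f" "elem_dist (Inr (R, x)) f = q R x f"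
  by (simp_all add: elem_dist_def)

lemma elem_dist_nonneg:
  assumes "w \<in> univ Xs" "f \<in> set (elem_tuple w) \<rightarrow>\<^sub>E univ A"
  shows "0 \<le> elem_dist w f"
  using assms(1)
proof (cases rule: univ_starE)
  case (Inl x)
  with assms(2) card_set_bounds[of x] p_bounds[of "set x" f] show ?thesis by auto
qed (use assms q_bounds in auto)

lemma elem_dist_marginal:
  assumes "w \<in> univ Xs" "U \<noteq> {}" "U \<subseteq> set (elem_tuple w)" "card U \<le> k" "f \<in> U \<rightarrow>\<^sub>E univ A"
  shows "p U f = (\<Sum>g\<in>{g \<in> set (elem_tuple w) \<rightarrow>\<^sub>E univ A. restrict g U = f}. elem_dist w g)"
  using assms(1)
proof (cases rule: univ_starE)
  case (Inl x)
  with assms card_set_bounds[of x] show ?thesis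
    by (simp add: p_marginal)
qed (use assms q_marginal in auto)

lemma elem_dist_sum:
  assumes "w \<in> univ Xs"
  shows "(\<Sum>f\<in>set (elem_tuple w) \<rightarrow>\<^sub>E univ A. elem_dist w f) = 1"
proof -
  define v where "v = hd (elem_tuple w)"
  have v: "v \<in> set (elem_tuple w)" "v \<in> univ X"
    using elem_tuple_univ_star[OF signature struc_X assms] by (auto simp: v_def)
  have "1 = (\<Sum>f'\<in>{v} \<rightarrow>\<^sub>E univ A. p {v} f')"
    using v k_pos by (simp add: p_sum)
  also have "\<dots> = (\<Sum>f'\<in>{v} \<rightarrow>\<^sub>E univ A.
      \<Sum>f\<in>{f \<in> set (elem_tuple w) \<rightarrow>\<^sub>E univ A. restrict f {v} = f'}. elem_dist w f)"
    using assms v k_pos by (intro sum.cong refl elem_dist_marginal) auto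
  also have "\<dots> = (\<Sum>f\<in>set (elem_tuple w) \<rightarrow>\<^sub>E univ A. elem_dist w f)"
  proof (rule sum.group)
    show "(\<lambda>f. restrict f {v}) ` (set (elem_tuple w) \<rightarrow>\<^sub>E univ A) \<subseteq> {v} \<rightarrow>\<^sub>E univ A"
      using v(1) by (intro image_subsetI) (simp add: restrict_PiE_iff PiE_iff)
  qed (use finite_univ_A in \<open>auto simp: finite_PiE\<close>)
  finally show ?thesis ..
qed

lemma elem_map_in_univ_if_elem_dist_nonzero:
  assumes "w \<in> univ Xs" "f \<in> set (elem_tuple w) \<rightarrow>\<^sub>E univ A" "elem_dist w f \<noteq> 0"
  shows "elem_map f w \<in> univ As"
  using assms(1)
proof (cases rule: univ_starE)
  case (Inr R x)
  with assms q_support[of R x f] show ?thesis by auto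
qed (use assms in auto)

lemma elem_dist_partial_sum_bounds:
  assumes "w \<in> univ Xs"
  shows "0 \<le> (\<Sum>f\<in>{f \<in> set (elem_tuple w) \<rightarrow>\<^sub>E univ A. P f}. elem_dist w f) \<and>
    (\<Sum>f\<in>{f \<in> set (elem_tuple w) \<rightarrow>\<^sub>E univ A. P f}. elem_dist w f) \<le> 1"
proof
  show "0 \<le> (\<Sum>f\<in>{f \<in> set (elem_tuple w) \<rightarrow>\<^sub>E univ A. P f}. elem_dist w f)"
    using elem_dist_nonneg[OF assms] by (intro sum_nonneg) auto
  have "(\<Sum>f\<in>{f \<in> set (elem_tuple w) \<rightarrow>\<^sub>E univ A. P f}. elem_dist w f)
      \<le> (\<Sum>f\<in>set (elem_tuple w) \<rightarrow>\<^sub>E univ A. elem_dist w f)"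
    using elem_dist_nonneg[OF assms] finite_univ_A by (intro sum_mono2) (auto simp: finite_PiE)
  then show "(\<Sum>f\<in>{f \<in> set (elem_tuple w) \<rightarrow>\<^sub>E univ A. P f}. elem_dist w f) \<le> 1"
    using elem_dist_sum[OF assms] by simp
qed

definition push_dist :: "('x, 'r) star_elem \<Rightarrow> ('a, 'r) star_elem \<Rightarrow> rat" where
  "push_dist w c = (\<Sum>f\<in>{f \<in> set (elem_tuple w) \<rightarrow>\<^sub>E univ A. elem_map f w = c}. elem_dist w f)"

lemma push_dist_bounds: "w \<in> univ Xs \<Longrightarrow> 0 \<le> push_dist w c \<and> push_dist w c \<le> 1"
  unfolding push_dist_def by (rule elem_dist_partial_sum_bounds)

lemma push_dist_sum:
  assumes "w \<in> univ Xs"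
  shows "(\<Sum>c\<in>univ As. push_dist w c) = 1"
proof -
  have "(\<Sum>c\<in>univ As. push_dist w c) = (\<Sum>f\<in>set (elem_tuple w) \<rightarrow>\<^sub>E univ A. elem_dist w f)"
    unfolding push_dist_def using elem_map_in_univ_if_elem_dist_nonzero[OF assms]
    by (intro sum_group_support) (use finite_univ_A finite_univ_As in \<open>auto simp: finite_PiE\<close>)
  also have "\<dots> = 1"
    by (rule elem_dist_sum[OF assms])
  finally show ?thesis .
qed

lemma push_dist_subtuple:
  assumes w: "w \<in> univ Xs" and y: "set y \<subseteq> set (elem_tuple w)" "1 \<le> length y" "length y \<le> k"
  shows "push_dist (Inl y) c = (\<Sum>f\<in>{f \<in> set (elem_tuple w) \<rightarrow>\<^sub>E univ A. elem_map f (Inl y) = c}. elem_dist w f)"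
proof -
  let ?F = "set (elem_tuple w) \<rightarrow>\<^sub>E univ A"
  let ?T = "{f' \<in> set y \<rightarrow>\<^sub>E univ A. Inl (map f' y) = c}"
  let ?S = "{f \<in> ?F. elem_map f (Inl y) = c}"
  have "push_dist (Inl y) c = (\<Sum>f'\<in>?T. p (set y) f')"
    by (simp add: push_dist_def)
  also have "\<dots> = (\<Sum>f'\<in>?T. \<Sum>f\<in>{f \<in> ?F. restrict f (set y) = f'}. elem_dist w f)"
    using y card_length[of y] by (intro sum.cong refl elem_dist_marginal[OF w]) auto
  also have "\<dots> = (\<Sum>f'\<in>?T. \<Sum>f\<in>{f \<in> ?S. restrict f (set y) = f'}. elem_dist w f)"
    by (intro sum.cong refl arg_cong2[where f = sum]) (auto simp: restrict_eq_iff_map_eq)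
  also have "\<dots> = (\<Sum>f\<in>?S. elem_dist w f)"
  proof (rule sum.group)
    show "(\<lambda>f. restrict f (set y)) ` ?S \<subseteq> ?T"
      using y(1) by (auto simp: restrict_PiE_iff PiE_iff)
  qed (use finite_univ_A in \<open>auto simp: finite_PiE\<close>)
  finally show ?thesis .
qed

definition joint_dist :: "('x, 'r) star_elem list \<Rightarrow> (('x, 'r) star_elem \<Rightarrow> ('a, 'r) star_elem) \<Rightarrow> rat" where
  "joint_dist xs h = (\<Sum>f\<in>{f \<in> set (elem_tuple (hd xs)) \<rightarrow>\<^sub>E univ A. \<forall>w\<in>set xs. elem_map f w = h w}.
     elem_dist (hd xs) f)"

lemma joint_dist_bounds:
  "s \<in> star_sig sig ar k \<Longrightarrow> xs \<in> rels Xs s \<Longrightarrow> 0 \<le> joint_dist xs h \<and> joint_dist xs h \<le> 1"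
  using rels_star_members[OF struc_X] elem_dist_partial_sum_bounds by (simp add: joint_dist_def)

lemma joint_dist_marginal:
  assumes "s \<in> star_sig sig ar k" "xs \<in> rels Xs s" "u \<in> set xs"
  shows "(\<Sum>h\<in>{h \<in> set xs \<rightarrow>\<^sub>E univ As. h u = c}. joint_dist xs h) = push_dist u c"
proof -
  let ?F = "set (elem_tuple (hd xs)) \<rightarrow>\<^sub>E univ A"
  have members: "hd xs \<in> univ Xs" "\<forall>v\<in>set xs. v = hd xs \<or>
      (\<exists>y. v = Inl y \<and> set y \<subseteq> set (elem_tuple (hd xs)) \<and> 1 \<le> length y \<and> length y \<le> k)"
    using rels_star_members[OF struc_X assms(1,2)] by auto
  have "elem_map f v \<in> univ As" if "f \<in> ?F" "elem_dist (hd xs) f \<noteq> 0" "v \<in> set xs" for f v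
    using members that elem_map_in_univ_if_elem_dist_nonzero[OF members(1) that(1,2)]
    by (force simp: PiE_iff)
  then have "(\<Sum>h\<in>{h \<in> set xs \<rightarrow>\<^sub>E univ As. h u = c}. joint_dist xs h) =
      (\<Sum>f\<in>{f \<in> ?F. elem_map f u = c}. elem_dist (hd xs) f)"
    unfolding joint_dist_def using assms(3) finite_univ_A finite_univ_As
    by (intro sum_PiE_marginal) (auto simp: finite_PiE)
  also have "\<dots> = push_dist u c"
    using members(2) assms(3) push_dist_subtuple[OF members(1)]
    by (auto simp: push_dist_def)
  finally show ?thesis .
qed

lemma joint_dist_support:
  assumes "s \<in> star_sig sig ar k" "xs \<in> rels Xs s" "map h xs \<notin> rels As s"
  shows "joint_dist xs h = 0"
proof (rule ccontr)
  assume "joint_dist xs h \<noteq> 0"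
  then obtain f where "f \<in> {f \<in> set (elem_tuple (hd xs)) \<rightarrow>\<^sub>E univ A. \<forall>w\<in>set xs. elem_map f w = h w}"
    and nonzero: "elem_dist (hd xs) f \<noteq> 0"
    unfolding joint_dist_def by (rule sum.not_neutral_contains_not_neutral)
  then have f: "f \<in> set (elem_tuple (hd xs)) \<rightarrow>\<^sub>E univ A" "\<forall>w\<in>set xs. elem_map f w = h w"
    by auto
  have "hd xs \<in> univ Xs"
    using rels_star_members[OF struc_X assms(1,2)] by blast
  from elem_map_in_univ_if_elem_dist_nonzero[OF this f(1) nonzero]
  have "map (elem_map f) xs \<in> rels As s"
    by (rule elem_map_in_rels_star[OF struc_X assms(1,2)])
  moreover have "map (elem_map f) xs = map h xs"
    using f(2) by simp
  ultimately show False
    using assms(3) by simp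
qed

lemma SA_solution_star:
  "SA_solution (star_sig sig ar k) 1 Xs As (\<lambda>V h. push_dist (the_elem V) (h (the_elem V))) (\<lambda>_. joint_dist)"
  using finite_univ_Xs push_dist_bounds push_dist_sum joint_dist_bounds joint_dist_marginal joint_dist_support
  by (intro SA_solution_1I) auto

end

section \<open>Pulling an SA^1 solution back\<close>

locale SA_1_star_solution = star_structures sig ar X A k
  + SA_solution "star_sig sig ar k" 1 "star sig ar k X" "star sig ar k A" P Q
  for sig :: "'r set" and ar and X :: "('x, 'r) struc" and A :: "('a, 'r) struc" and k P Q
begin

definition point_dist :: "('x, 'r) star_elem \<Rightarrow> ('a, 'r) star_elem \<Rightarrow> rat" where
  "point_dist w c = P {w} (\<lambda>_\<in>{w}. c)"

lemma point_dist_bounds: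
  "w \<in> univ Xs \<Longrightarrow> c \<in> univ As \<Longrightarrow> 0 \<le> point_dist w c \<and> point_dist w c \<le> 1"
  using p_bounds[of "{w}" "\<lambda>_\<in>{w}. c"] by (simp add: point_dist_def)

lemma point_dist_sum:
  assumes "w \<in> univ Xs"
  shows "(\<Sum>c\<in>univ As. point_dist w c) = 1"
proof -
  have "(\<Sum>c\<in>univ As. point_dist w c) = (\<Sum>f\<in>{w} \<rightarrow>\<^sub>E univ As. point_dist w (f w))"
    by (rule sum_PiE_singleton[symmetric])
  also have "\<dots> = (\<Sum>f\<in>{w} \<rightarrow>\<^sub>E univ As. P {w} f)"
    unfolding point_dist_def
    by (intro sum.cong refl arg_cong[where f = "P {w}"]) (auto simp: fun_eq_iff PiE_iff extensional_def)
  also have "\<dots> = 1"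
    using assms by (intro p_sum) auto
  finally show ?thesis .
qed

lemma point_dist_marginal:
  assumes "s \<in> star_sig sig ar k" "xs \<in> rels Xs s" "u \<in> set xs" "c \<in> univ As"
  shows "point_dist u c = (\<Sum>h\<in>{h \<in> set xs \<rightarrow>\<^sub>E univ As. h u = c}. Q s xs h)"
proof -
  have c: "(\<lambda>_\<in>{u}. c) \<in> {u} \<rightarrow>\<^sub>E univ As"
    using assms(4) by simp
  have "point_dist u c = (\<Sum>h\<in>{h \<in> set xs \<rightarrow>\<^sub>E univ As. restrict h {u} = (\<lambda>_\<in>{u}. c)}. Q s xs h)"
    unfolding point_dist_def using assms c by (intro q_marginal) auto
  also have "\<dots> = (\<Sum>h\<in>{h \<in> set xs \<rightarrow>\<^sub>E univ As. h u = c}. Q s xs h)"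
    using restrict_singleton_eq_iff[OF c] by simp
  finally show ?thesis .
qed

lemma rels_if_point_dist_nonzero:
  assumes "s \<in> star_sig sig ar k" "[w] \<in> rels Xs s" "c \<in> univ As" "point_dist w c \<noteq> 0"
  shows "[c] \<in> rels As s"
proof -
  let ?h = "\<lambda>_\<in>{w}. c"
  have "{h \<in> set [w] \<rightarrow>\<^sub>E univ As. h w = c} = {?h}"
    using assms(3) by (auto simp: fun_eq_iff PiE_iff extensional_def)
  then have "Q s [w] ?h \<noteq> 0"
    using point_dist_marginal[OF assms(1,2) _ assms(3)] assms(4) by simp
  with assms(1-3) q_support[of s "[w]" ?h] show ?thesis
    by auto
qed

lemma point_dist_support:
  assumes w: "w \<in> univ Xs" and "c \<in> univ As" "point_dist w c \<noteq> 0"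
  shows "\<exists>g \<in> set (elem_tuple w) \<rightarrow>\<^sub>E univ A. c = elem_map g w"
proof (rule ex_elem_map_eq_if_rels_unary_sym[OF struc_X struc_A w])
  fix S assume S: "S \<subseteq> {0..<length (elem_tuple w)}" "agree_on S (elem_tuple w)"
  have "[elem_map id w] \<in> rels Xs (unary_sym w S)"
    using w S by (intro elem_map_in_rels_unary_sym) auto
  with assms S show "[c] \<in> rels As (unary_sym w S)"
    by (intro rels_if_point_dist_nonzero unary_sym_in_star_sig[OF struc_X]) auto
qed

lemma point_dist_proj_elem:
  assumes w: "w \<in> univ Xs" and ix: "1 \<le> length ix" "length ix \<le> k" "set ix \<subseteq> {0..<length (elem_tuple w)}"
    and c: "c \<in> univ As"
  shows "point_dist (proj_elem ix w) c = (\<Sum>c'\<in>{c' \<in> univ As. proj_elem ix c' = c}. point_dist w c')"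
proof -
  let ?s = "binary_sym w ix" and ?xs = "[w, proj_elem ix w]"
  let ?H = "set ?xs \<rightarrow>\<^sub>E univ As"
  have s: "?s \<in> star_sig sig ar k"
    using binary_sym_in_star_sig[OF struc_X w ix] .
  have xs: "?xs \<in> rels Xs ?s"
    using elem_map_in_rels_binary_sym[of id w] w by simp
  have proj: "h (proj_elem ix w) = proj_elem ix (h w)" if "h \<in> ?H" "Q ?s ?xs h \<noteq> 0" for h
    using q_support[OF s xs that(1)] that(2) by (auto intro: rels_binary_sym_proj_elem)
  have fin: "finite ?H"
    using finite_univ_As by (simp add: finite_PiE)
  have "point_dist (proj_elem ix w) c = (\<Sum>h\<in>?H. if h (proj_elem ix w) = c then Q ?s ?xs h else 0)"
    using point_dist_marginal[OF s xs _ c, of "proj_elem ix w"] unfolding sum.inter_filter[OF fin]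
    by simp
  also have "\<dots> = (\<Sum>h\<in>?H. if proj_elem ix (h w) = c then Q ?s ?xs h else 0)"
  proof (rule sum.cong[OF refl])
    fix h assume "h \<in> ?H"
    then show "(if h (proj_elem ix w) = c then Q ?s ?xs h else 0) =
        (if proj_elem ix (h w) = c then Q ?s ?xs h else 0)"
      using proj by (cases "Q ?s ?xs h = 0") auto
  qed
  also have "\<dots> = (\<Sum>h\<in>{h \<in> ?H. proj_elem ix (h w) = c}. Q ?s ?xs h)"
    by (rule sum.inter_filter[OF fin, symmetric])
  also have "\<dots> = (\<Sum>c'\<in>{c' \<in> univ As. proj_elem ix c' = c}.
      \<Sum>h\<in>{h \<in> {h \<in> ?H. proj_elem ix (h w) = c}. h w = c'}. Q ?s ?xs h)"
    by (rule sum.group[symmetric]) (use fin finite_univ_As in auto)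
  also have "\<dots> = (\<Sum>c'\<in>{c' \<in> univ As. proj_elem ix c' = c}. \<Sum>h\<in>{h \<in> ?H. h w = c'}. Q ?s ?xs h)"
    by (intro sum.cong refl arg_cong2[where f = sum]) auto
  also have "\<dots> = (\<Sum>c'\<in>{c' \<in> univ As. proj_elem ix c' = c}. point_dist w c')"
    using point_dist_marginal[OF s xs] by simp
  finally show ?thesis .
qed

definition pull_dist :: "('x, 'r) star_elem \<Rightarrow> ('x \<Rightarrow> 'a) \<Rightarrow> rat" where
  "pull_dist w g = (if elem_map g w \<in> univ As then point_dist w (elem_map g w) else 0)"

lemma pull_dist_bounds: "w \<in> univ Xs \<Longrightarrow> 0 \<le> pull_dist w g \<and> pull_dist w g \<le> 1"
  using point_dist_bounds by (simp add: pull_dist_def)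

lemma sum_pull_dist:
  assumes w: "w \<in> univ Xs"
  shows "(\<Sum>c\<in>{c \<in> univ As. Pr c}. point_dist w c) =
    (\<Sum>g\<in>{g \<in> set (elem_tuple w) \<rightarrow>\<^sub>E univ A. Pr (elem_map g w)}. pull_dist w g)"
proof -
  let ?F = "set (elem_tuple w) \<rightarrow>\<^sub>E univ A"
  let ?S = "{g \<in> ?F. elem_map g w \<in> univ As \<and> Pr (elem_map g w)}"
  have "(\<Sum>g\<in>{g \<in> ?F. Pr (elem_map g w)}. pull_dist w g) = (\<Sum>g\<in>?S. pull_dist w g)"
    using finite_univ_A by (intro sum.mono_neutral_right) (auto simp: finite_PiE pull_dist_def)
  also have "\<dots> = (\<Sum>g\<in>?S. point_dist w (elem_map g w))"
    by (intro sum.cong) (auto simp: pull_dist_def)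
  also have "\<dots> = (\<Sum>c\<in>(\<lambda>g. elem_map g w) ` ?S. point_dist w c)"
    by (rule sum.reindex_cong[symmetric, OF inj_on_subset[OF inj_on_elem_map]]) auto
  also have "\<dots> = (\<Sum>c\<in>{c \<in> univ As. Pr c}. point_dist w c)"
  proof (rule sum.mono_neutral_left)
    show "\<forall>c\<in>{c \<in> univ As. Pr c} - (\<lambda>g. elem_map g w) ` ?S. point_dist w c = 0"
      using point_dist_support[OF w] by fastforce
  qed (use finite_univ_As in auto)
  finally show ?thesis ..
qed

lemma pull_dist_subtuple:
  assumes w: "w \<in> univ Xs" and y: "set y \<subseteq> set (elem_tuple w)" "1 \<le> length y" "length y \<le> k"
    and f: "f \<in> set y \<rightarrow>\<^sub>E univ A"
  shows "pull_dist (Inl y) f = (\<Sum>g\<in>{g \<in> set (elem_tuple w) \<rightarrow>\<^sub>E univ A. restrict g (set y) = f}. pull_dist w g)"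
proof -
  obtain ix where ix: "set ix \<subseteq> {0..<length (elem_tuple w)}" "length ix = length y"
    and y_eq: "y = map ((!) (elem_tuple w)) ix"
    using ex_indices_map_nth[OF y(1)] by blast
  have proj: "proj_elem ix w = Inl y"
    by (simp add: proj_elem_def y_eq)
  have fy: "Inl (map f y) \<in> univ As"
    using f y by (auto simp: PiE_iff)
  have "pull_dist (Inl y) f = point_dist (proj_elem ix w) (Inl (map f y))"
    using fy by (simp add: pull_dist_def proj)
  also have "\<dots> = (\<Sum>c\<in>{c \<in> univ As. proj_elem ix c = Inl (map f y)}. point_dist w c)"
    using point_dist_proj_elem[OF w _ _ ix(1) fy] ix(2) y by simp
  also have "\<dots> = (\<Sum>g\<in>{g \<in> set (elem_tuple w) \<rightarrow>\<^sub>E univ A. proj_elem ix (elem_map g w) = Inl (map f y)}.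
      pull_dist w g)"
    by (rule sum_pull_dist[OF w])
  also have "\<dots> = (\<Sum>g\<in>{g \<in> set (elem_tuple w) \<rightarrow>\<^sub>E univ A. restrict g (set y) = f}. pull_dist w g)"
  proof -
    have proj_map: "proj_elem ix (elem_map g w) = Inl (map g y)" for g
      using elem_map_proj_elem[OF ix(1), of g] by (simp add: proj)
    show ?thesis
      by (simp only: proj_map restrict_eq_iff_map_eq[OF f] sum.inject)
  qed
  finally show ?thesis .
qed

lemma pull_dist_marginal:
  assumes w: "w \<in> univ Xs" and U: "U \<noteq> {}" "U \<subseteq> set (elem_tuple w)" "card U \<le> k"
    and f: "f \<in> U \<rightarrow>\<^sub>E univ A"
  shows "pull_dist (Inl (enum_list U)) f =
    (\<Sum>g\<in>{g \<in> set (elem_tuple w) \<rightarrow>\<^sub>E univ A. restrict g U = f}. pull_dist w g)"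
proof -
  have "finite U"
    using U(2) by (rule finite_subset) simp
  with U(1) have "set (enum_list U) = U" "1 \<le> length (enum_list U)"
    by (simp_all add: enum_list Suc_le_eq card_gt_0_iff)
  with U f show ?thesis
    using pull_dist_subtuple[OF w, of "enum_list U" f] by (simp add: enum_list[OF \<open>finite U\<close>])
qed

lemma pull_dist_sum:
  assumes "w \<in> univ Xs"
  shows "(\<Sum>g\<in>set (elem_tuple w) \<rightarrow>\<^sub>E univ A. pull_dist w g) = 1"
  using sum_pull_dist[OF assms, of "\<lambda>_. True"] point_dist_sum[OF assms] by simp

(* p V is read off an arbitrary enumeration of V; by pull_dist_marginal the choice is immaterial. *)
lemma SA_solution_pullback:
  "SA_solution sig k X A (\<lambda>V. pull_dist (Inl (enum_list V))) (\<lambda>R x. pull_dist (Inr (R, x)))"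
proof
  have enum: "Inl (enum_list V) \<in> univ Xs" "set (enum_list V) = V"
    if "V \<subseteq> univ X" "1 \<le> card V" "card V \<le> k" for V
    using enum_list[OF finite_subset[OF that(1) finite_univ_X]] that by auto
  show "0 \<le> pull_dist (Inl (enum_list V)) f \<and> pull_dist (Inl (enum_list V)) f \<le> 1"
    if "V \<subseteq> univ X" "1 \<le> card V" "card V \<le> k" for V f
    by (rule pull_dist_bounds[OF enum(1)[OF that]])
  show "(\<Sum>f\<in>V \<rightarrow>\<^sub>E univ A. pull_dist (Inl (enum_list V)) f) = 1"
    if "V \<subseteq> univ X" "1 \<le> card V" "card V \<le> k" for V
    using pull_dist_sum[OF enum(1)[OF that]] by (simp add: enum(2)[OF that])
  show "pull_dist (Inl (enum_list U)) f =
      (\<Sum>g\<in>{g \<in> V \<rightarrow>\<^sub>E univ A. restrict g U = f}. pull_dist (Inl (enum_list V)) g)"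
    if "U \<noteq> {}" "U \<subseteq> V" "V \<subseteq> univ X" "card V \<le> k" "f \<in> U \<rightarrow>\<^sub>E univ A" for U V f
  proof -
    have "finite V"
      using that(3) finite_univ_X by (rule finite_subset)
    with that(1,2) have card: "card U \<le> card V" "1 \<le> card V"
      by (auto simp: card_mono Suc_le_eq card_gt_0_iff)
    note V = enum[OF that(3) card(2) that(4)]
    from that card show ?thesis
      using pull_dist_marginal[OF V(1), of U f] by (simp add: V(2))
  qed
  show "pull_dist (Inl (enum_list U)) f =
      (\<Sum>g\<in>{g \<in> set x \<rightarrow>\<^sub>E univ A. restrict g U = f}. pull_dist (Inr (R, x)) g)"
    if "R \<in> sig" "x \<in> rels X R" "U \<noteq> {}" "U \<subseteq> set x" "card U \<le> k" "f \<in> U \<rightarrow>\<^sub>E univ A"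
    for R x U f
    using that pull_dist_marginal[of "Inr (R, x)" U f] by simp
  show "0 \<le> pull_dist (Inr (R, x)) f \<and> pull_dist (Inr (R, x)) f \<le> 1"
    if "R \<in> sig" "x \<in> rels X R" for R x f
    using that by (intro pull_dist_bounds) simp
  show "pull_dist (Inr (R, x)) f = 0" if "map f x \<notin> rels A R" for R x f
    using that by (simp add: pull_dist_def)
qed

end

theorem lemma7p3:
  fixes sig :: "'r set" and ar :: "'r \<Rightarrow> nat"
    and X :: "('x, 'r) struc" and A :: "('a, 'r) struc" and k :: nat
  assumes "signature sig ar"
    and "is_struc sig ar X"
    and "is_struc sig ar A"
    and "1 \<le> k"
  shows "SA_feasible sig ar k X A \<longleftrightarrow>
         SA_feasible (star_sig sig ar k) star_ar 1 (star sig ar k X) (star sig ar k A)"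
proof -
  have structures: "star_structures sig ar X A k"
    using assms by (rule star_structures.intro)
  show ?thesis
    unfolding SA_feasible_iff_SA_solution
    using SA_k_solution.SA_solution_star[OF SA_k_solution.intro[OF structures]]
      SA_1_star_solution.SA_solution_pullback[OF SA_1_star_solution.intro[OF structures]]
    by blast
qed

end
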